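(* Let $S$ be a set. A set of $S$-probabilities is $\vee$-specific if and only if it is both specific and weakly structured; i.e. $\mathcal C_2=\mathcal C_1\cap\mathcal C_4$.
   Context: An $S$-probability is a function $p\colon S\to[0,1]$; sets $P$ of them are ordered pointwise, $0,1$ are constant functions, $p':=1-p$, sums are pointwise; $p\vee q$ denotes the supremum in $P$. $p\wedge q=0$ means the only $x\in P$ with $x\le p,q$ is $x=0$; $p\perp q$ means $p\le 1-q$. Conditions: (1) $0,1\in P$; (2) $p\in P\Rightarrow 1-p\in P$; (3) $p,q\in P$, $p\wedge q=0\Rightarrow p+q\in P$; (6) $p,q\in P$, $p\wedge q=0\Rightarrow p+q\in P$ and $p+q=p\vee q$ in $P$; (8) $p,q,r\in P$, $p\perp q$, $q\perp r$, $p\wedge r=0\Rightarrow p+q+r\le 1$. $\mathcal C_1$: specific sets ((1),(2),(3)); $\mathcal C_2$: $\vee$-specific sets (specific sets satisfying (6)); $\mathcal C_4$: weakly structured sets ((1),(2),(8)). *)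

theory Defs
  imports Main "HOL.Real"
begin

text \<open>The set S is modelled as a type 's; an S-probability is a function 's \<Rightarrow> real
  with values in [0,1]. Functions are ordered pointwise (Isabelle's standard order on functions).\<close>

definition sprob :: "('s \<Rightarrow> real) \<Rightarrow> bool" where
  "sprob p \<longleftrightarrow> (\<forall>s. 0 \<le> p s \<and> p s \<le> 1)"

definition zerof :: "'s \<Rightarrow> real" where "zerof = (\<lambda>_. 0)"
definition onef :: "'s \<Rightarrow> real" where "onef = (\<lambda>_. 1)"
definition compl_p :: "('s \<Rightarrow> real) \<Rightarrow> ('s \<Rightarrow> real)" where "compl_p p = (\<lambda>s. 1 - p s)"
definition add_p :: "('s \<Rightarrow> real) \<Rightarrow> ('s \<Rightarrow> real) \<Rightarrow> ('s \<Rightarrow> real)" where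
  "add_p p q = (\<lambda>s. p s + q s)"

text \<open>p \<and> q = 0 in P: the only x in P below both p and q is 0.\<close>
definition meet_zero :: "('s \<Rightarrow> real) set \<Rightarrow> ('s \<Rightarrow> real) \<Rightarrow> ('s \<Rightarrow> real) \<Rightarrow> bool" where
  "meet_zero P p q \<longleftrightarrow> (\<forall>x\<in>P. x \<le> p \<and> x \<le> q \<longrightarrow> x = zerof)"

definition orth :: "('s \<Rightarrow> real) \<Rightarrow> ('s \<Rightarrow> real) \<Rightarrow> bool" where
  "orth p q \<longleftrightarrow> p \<le> compl_p q"

definition is_sup_in :: "('s \<Rightarrow> real) set \<Rightarrow> ('s \<Rightarrow> real) \<Rightarrow> ('s \<Rightarrow> real) \<Rightarrow> ('s \<Rightarrow> real) \<Rightarrow> bool" where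
  "is_sup_in P p q r \<longleftrightarrow> r \<in> P \<and> p \<le> r \<and> q \<le> r \<and> (\<forall>x\<in>P. p \<le> x \<and> q \<le> x \<longrightarrow> r \<le> x)"

definition cond1 :: "('s \<Rightarrow> real) set \<Rightarrow> bool" where
  "cond1 P \<longleftrightarrow> zerof \<in> P \<and> onef \<in> P"
definition cond2 :: "('s \<Rightarrow> real) set \<Rightarrow> bool" where
  "cond2 P \<longleftrightarrow> (\<forall>p\<in>P. compl_p p \<in> P)"
definition cond3 :: "('s \<Rightarrow> real) set \<Rightarrow> bool" where
  "cond3 P \<longleftrightarrow> (\<forall>p\<in>P. \<forall>q\<in>P. meet_zero P p q \<longrightarrow> add_p p q \<in> P)"
definition cond6 :: "('s \<Rightarrow> real) set \<Rightarrow> bool" where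
  "cond6 P \<longleftrightarrow> (\<forall>p\<in>P. \<forall>q\<in>P. meet_zero P p q \<longrightarrow> add_p p q \<in> P \<and> is_sup_in P p q (add_p p q))"
definition cond8 :: "('s \<Rightarrow> real) set \<Rightarrow> bool" where
  "cond8 P \<longleftrightarrow> (\<forall>p\<in>P. \<forall>q\<in>P. \<forall>r\<in>P. orth p q \<and> orth q r \<and> meet_zero P p r
      \<longrightarrow> add_p (add_p p q) r \<le> onef)"

definition specific :: "('s \<Rightarrow> real) set \<Rightarrow> bool" where
  "specific P \<longleftrightarrow> (\<forall>p\<in>P. sprob p) \<and> cond1 P \<and> cond2 P \<and> cond3 P"
definition vee_specific :: "('s \<Rightarrow> real) set \<Rightarrow> bool" where
  "vee_specific P \<longleftrightarrow> specific P \<and> cond6 P"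
definition weakly_structured :: "('s \<Rightarrow> real) set \<Rightarrow> bool" where
  "weakly_structured P \<longleftrightarrow> (\<forall>p\<in>P. sprob p) \<and> cond1 P \<and> cond2 P \<and> cond8 P"

end

theory Submission
  imports Defs
begin

text \<open>Since P is closed under complements, the elements q with p \<perp> q and q \<perp> r are exactly the
  complements 1 - x of the upper bounds x of p and r in P, and p + q + r \<le> 1 says p + r \<le> 1 - q.
  So, for p \<and> r = 0, condition (8) states precisely that p + r lies below every upper bound of p and r
  in P, which is the supremum half of condition (6); the remaining half, p + r \<in> P being an upper
  bound, is condition (3) together with nonnegativity.\<close>

lemma compl_p_compl_p [simp]: "compl_p (compl_p p) = p"
  by (simp add: compl_p_def)

lemma orth_commute: "orth p q \<longleftrightarrow> orth q p"
  by (simp add: orth_def compl_p_def le_fun_def) (smt (verit))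

lemma orth_compl_p_iff_le: "orth p (compl_p x) \<longleftrightarrow> p \<le> x"
  by (simp add: orth_def)

lemma add_p_add_p_le_onef_iff: "add_p (add_p p q) r \<le> onef \<longleftrightarrow> add_p p r \<le> compl_p q"
  by (auto simp: add_p_def compl_p_def onef_def le_fun_def algebra_simps)

lemma le_add_p_left: "sprob q \<Longrightarrow> p \<le> add_p p q"
  by (simp add: sprob_def add_p_def le_fun_def)

lemma le_add_p_right: "sprob p \<Longrightarrow> q \<le> add_p p q"
  by (simp add: sprob_def add_p_def le_fun_def)

lemma cond8_if_cond6:
  assumes "cond2 P" "cond6 P"
  shows "cond8 P"
  unfolding cond8_def
proof (intro ballI impI)
  fix p q r assume "p \<in> P" "q \<in> P" "r \<in> P" and h: "orth p q \<and> orth q r \<and> meet_zero P p r"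
  have sup: "is_sup_in P p r (add_p p r)"
    using assms(2) \<open>p \<in> P\<close> \<open>r \<in> P\<close> h by (auto simp: cond6_def)
  have "compl_p q \<in> P" using assms(1) \<open>q \<in> P\<close> by (simp add: cond2_def)
  moreover have "p \<le> compl_p q" "r \<le> compl_p q"
    using h orth_commute[of q r] by (simp_all add: orth_def)
  ultimately have "add_p p r \<le> compl_p q" using sup by (simp add: is_sup_in_def)
  then show "add_p (add_p p q) r \<le> onef" by (simp add: add_p_add_p_le_onef_iff)
qed

lemma cond6_if_cond8:
  assumes "\<forall>p\<in>P. sprob p" "cond2 P" "cond3 P" "cond8 P"
  shows "cond6 P"
  unfolding cond6_def
proof (intro ballI impI)
  fix p q assume "p \<in> P" "q \<in> P" and "meet_zero P p q"
  have least: "add_p p q \<le> x" if "x \<in> P" "p \<le> x" "q \<le> x" for x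
  proof -
    have "compl_p x \<in> P" using assms(2) \<open>x \<in> P\<close> by (simp add: cond2_def)
    moreover have "orth p (compl_p x)" "orth (compl_p x) q"
      using that orth_commute[of "compl_p x" q] by (simp_all add: orth_compl_p_iff_le)
    ultimately have "add_p (add_p p (compl_p x)) q \<le> onef"
      using assms(4) \<open>p \<in> P\<close> \<open>q \<in> P\<close> \<open>meet_zero P p q\<close> by (simp add: cond8_def)
    then show ?thesis by (simp add: add_p_add_p_le_onef_iff)
  qed
  have "add_p p q \<in> P"
    using assms(3) \<open>p \<in> P\<close> \<open>q \<in> P\<close> \<open>meet_zero P p q\<close> by (simp add: cond3_def)
  moreover have "p \<le> add_p p q" "q \<le> add_p p q"
    using assms(1) \<open>p \<in> P\<close> \<open>q \<in> P\<close> le_add_p_left le_add_p_right by blast+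
  ultimately show "add_p p q \<in> P \<and> is_sup_in P p q (add_p p q)"
    using least by (simp add: is_sup_in_def)
qed

theorem lemma3p2:
  fixes P :: "('s \<Rightarrow> real) set"
  shows "vee_specific P \<longleftrightarrow> specific P \<and> weakly_structured P"
  using cond8_if_cond6[of P] cond6_if_cond8[of P]
  by (auto simp: vee_specific_def weakly_structured_def specific_def)

end
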